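(* For every $n\in\mathbb{N}$, $\beta>0$, $\lambda$ with $n>\lambda\ge 2\log\frac{2}{\beta}$, and $x\in\{0,1\}^n$, \[ \Pr\left[\left|P_{n,\lambda}(x)-\sum_{i=1}^n x_i\right|>\sqrt{2\lambda\log(2/\beta)}\cdot\frac{n}{n-\lambda}\right]\le\beta. \]
   Context: $P_{n,\lambda}(x)$ denotes the output of the bit-sum protocol: each of $n$ users with $x_i\in\{0,1\}$ independently draws $b\sim\mathrm{Ber}(\lambda/n)$ and sends $y_i=x_i$ if $b=0$ and a fresh $\mathrm{Ber}(1/2)$ bit if $b=1$; the messages are shuffled uniformly at random; the analyzer outputs $\frac{n}{n-\lambda}\left(\sum_{i=1}^n y_i-\frac{\lambda}{2}\right)$. $\log$ is the natural logarithm. *)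

theory Defs
  imports "HOL-Probability.Probability" "HOL-Combinatorics.Permutations"
begin

definition local_rand :: "nat \<Rightarrow> real \<Rightarrow> bool \<Rightarrow> bool pmf" where
  "local_rand n lam x =
     bernoulli_pmf (lam / real n) \<bind> (\<lambda>b. if b then bernoulli_pmf (1/2) else return_pmf x)"

fun rand_all :: "nat \<Rightarrow> real \<Rightarrow> bool list \<Rightarrow> bool list pmf" where
  "rand_all n lam [] = return_pmf []"
| "rand_all n lam (x # xs) =
     local_rand n lam x \<bind> (\<lambda>y. rand_all n lam xs \<bind> (\<lambda>ys. return_pmf (y # ys)))"

definition shuffle :: "'a list \<Rightarrow> 'a list pmf" where
  "shuffle ys = map_pmf (\<lambda>\<pi>. permute_list \<pi> ys)
                  (pmf_of_set {\<pi>. \<pi> permutes {..<length ys}})"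

definition bit_sum :: "bool list \<Rightarrow> real" where
  "bit_sum ys = (\<Sum>i<length ys. if ys ! i then 1 else 0)"

definition analyzer :: "nat \<Rightarrow> real \<Rightarrow> bool list \<Rightarrow> real" where
  "analyzer n lam ys = real n / (real n - lam) * (bit_sum ys - lam / 2)"

definition P_protocol :: "nat \<Rightarrow> real \<Rightarrow> bool list \<Rightarrow> real pmf" where
  "P_protocol n lam xs =
     rand_all n lam xs \<bind> (\<lambda>ys. map_pmf (analyzer n lam) (shuffle ys))"

end

theory Submission
  imports Defs
begin

text \<open>Shuffling does not change the number of ones, so the output is an affine image of the sum
of the randomized bits, with slope n/(n - lambda), mapping the mean of that sum to the true count.
The randomized bits are independent Bernoulli variables with parameter lambda/2n or 1 - lambda/2n,
and the centred moment generating function of either is at most exp (lambda s^2 / 2n) for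
|s| <= 1. The Chernoff bound at s = sqrt (2 lambda log (2/beta)) / lambda, which satisfies s <= 1
precisely because lambda >= 2 log (2/beta), bounds each tail of the sum by beta/2.\<close>

lemma exp_bound_abs:
  fixes u :: real
  assumes "\<bar>u\<bar> \<le> 1"
  shows "exp u \<le> 1 + u + u\<^sup>2"
proof (cases "u \<ge> 0")
  case True
  then show ?thesis using exp_bound assms by auto
next
  case False
  define v where "v = - u"
  have v: "0 < v" "v \<le> 1" using False assms by (auto simp: v_def)
  have lower: "1 + v + v\<^sup>2 / 2 \<le> exp v" using exp_lower_Taylor_quadratic v by auto
  have pos: "0 < 1 + v + v\<^sup>2 / 2" using v by (simp add: add_pos_nonneg)
  have "(1 - v + v\<^sup>2) * (1 + v + v\<^sup>2 / 2) = 1 + v\<^sup>2 * (1 + v + v\<^sup>2) / 2"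
    by (simp add: field_simps power2_eq_square)
  then have "1 \<le> (1 - v + v\<^sup>2) * (1 + v + v\<^sup>2 / 2)"
    using v by simp
  then have "1 / (1 + v + v\<^sup>2 / 2) \<le> 1 - v + v\<^sup>2"
    using pos by (simp add: divide_le_eq)
  moreover have "exp u \<le> 1 / (1 + v + v\<^sup>2 / 2)"
    using lower pos by (simp add: v_def exp_minus field_simps)
  ultimately show ?thesis by (simp add: v_def)
qed

lemma bernoulli_centered_mgf_le:
  fixes r s :: real
  assumes "0 \<le> r" "\<bar>s\<bar> \<le> 1"
  shows "r * exp (s * (1 - r)) + (1 - r) * exp (- (s * r)) \<le> exp (r * s\<^sup>2)"
proof -
  have "r * exp (s * (1 - r)) + (1 - r) * exp (- (s * r))
      = exp (- (s * r)) * (1 + r * (exp s - 1))"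
    by (simp add: algebra_simps flip: exp_add)
  also have "\<dots> \<le> exp (- (s * r)) * exp (r * (exp s - 1))"
    using exp_ge_add_one_self by (intro mult_left_mono) auto
  also have "\<dots> \<le> exp (- (s * r)) * exp (r * (s + s\<^sup>2))"
    using exp_bound_abs[OF assms(2)] assms(1) by (intro mult_left_mono exp_mono) auto
  also have "\<dots> = exp (r * s\<^sup>2)"
    by (simp add: algebra_simps flip: exp_add)
  finally show ?thesis .
qed

lemma nn_integral_bernoulli_centered_exp_le:
  fixes r s :: real
  assumes "0 \<le> r" "r \<le> 1" "\<bar>s\<bar> \<le> 1"
  shows "(\<integral>\<^sup>+y. ennreal (exp (s * (of_bool y - r))) \<partial>bernoulli_pmf r)
           \<le> ennreal (exp (min r (1 - r) * s\<^sup>2))"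
proof -
  let ?m = "r * exp (s * (1 - r)) + (1 - r) * exp (- (s * r))"
  have "?m \<le> exp (r * s\<^sup>2)"
    using assms by (intro bernoulli_centered_mgf_le) auto
  moreover have "?m \<le> exp ((1 - r) * s\<^sup>2)"
    using bernoulli_centered_mgf_le[of "1 - r" "- s"] assms by (simp add: algebra_simps)
  ultimately have "?m \<le> exp (min r (1 - r) * s\<^sup>2)"
    by (cases "r \<le> 1 - r") (auto simp: min_def)
  moreover have "(\<integral>\<^sup>+y. ennreal (exp (s * (of_bool y - r))) \<partial>bernoulli_pmf r) = ennreal ?m"
    using assms by (simp add: ennreal_mult' ennreal_plus mult.commute)
  ultimately show ?thesis
    by (simp add: ennreal_leI)
qed

definition local_rand_true_prob :: "nat \<Rightarrow> real \<Rightarrow> bool \<Rightarrow> real" where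
  "local_rand_true_prob n lam x = (if x then 1 - lam / (2 * real n) else lam / (2 * real n))"

lemma local_rand_eq_bernoulli_pmf:
  assumes "0 \<le> lam / real n" "lam / real n \<le> 1"
  shows "local_rand n lam x = bernoulli_pmf (local_rand_true_prob n lam x)"
proof (rule pmf_eqI)
  fix y
  have "pmf (local_rand n lam x) y = lam / real n / 2 + (1 - lam / real n) * of_bool (x = y)"
    using assms unfolding local_rand_def pmf_bind by (simp add: pmf_return)
  also have "\<dots> = pmf (bernoulli_pmf (local_rand_true_prob n lam x)) y"
    using assms by (cases x; cases y) (auto simp: local_rand_true_prob_def field_simps)
  finally show "pmf (local_rand n lam x) y = pmf (bernoulli_pmf (local_rand_true_prob n lam x)) y" .
qed

lemma min_local_rand_true_prob:
  assumes "0 \<le> lam / real n" "lam / real n \<le> 1"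
  shows "min (local_rand_true_prob n lam x) (1 - local_rand_true_prob n lam x) = lam / (2 * real n)"
  using assms by (auto simp: local_rand_true_prob_def min_def field_simps)

lemma bit_sum_Nil [simp]: "bit_sum [] = 0"
  by (simp add: bit_sum_def)

lemma bit_sum_Cons [simp]: "bit_sum (y # ys) = of_bool y + bit_sum ys"
  unfolding bit_sum_def by (simp add: sum.lessThan_Suc_shift del: sum.lessThan_Suc)

lemma bit_sum_eq_sum_mset: "bit_sum ys = sum_mset (image_mset of_bool (mset ys))"
  by (induction ys) auto

lemma bit_sum_permute_list:
  assumes "\<pi> permutes {..<length ys}"
  shows "bit_sum (permute_list \<pi> ys) = bit_sum ys"
  using assms by (simp add: bit_sum_eq_sum_mset)

lemma map_pmf_shuffle_invariant:
  assumes "\<And>\<pi>. \<pi> permutes {..<length ys} \<Longrightarrow> f (permute_list \<pi> ys) = f ys"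
  shows "map_pmf f (shuffle ys) = return_pmf (f ys)"
proof -
  let ?S = "{\<pi>. \<pi> permutes {..<length ys}}"
  have "finite ?S" "?S \<noteq> {}"
    using finite_permutations permutes_id by blast+
  then have "map_pmf (\<lambda>\<pi>. f (permute_list \<pi> ys)) (pmf_of_set ?S)
      = map_pmf (\<lambda>_. f ys) (pmf_of_set ?S)"
    using assms by (intro map_pmf_cong) auto
  then show ?thesis
    unfolding shuffle_def by (simp add: map_pmf_comp)
qed

lemma P_protocol_eq_map_rand_all:
  "P_protocol n lam xs = map_pmf (analyzer n lam) (rand_all n lam xs)"
proof -
  have "map_pmf (analyzer n lam) (shuffle ys) = return_pmf (analyzer n lam ys)" for ys
    by (rule map_pmf_shuffle_invariant) (simp add: analyzer_def bit_sum_permute_list)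
  then show ?thesis
    unfolding P_protocol_def by (simp add: map_pmf_def)
qed

definition rand_all_mean :: "nat \<Rightarrow> real \<Rightarrow> bool list \<Rightarrow> real" where
  "rand_all_mean n lam xs = sum_list (map (local_rand_true_prob n lam) xs)"

lemma rand_all_mean_eq:
  "rand_all_mean n lam xs
     = (1 - lam / real n) * bit_sum xs + real (length xs) * (lam / (2 * real n))"
  unfolding rand_all_mean_def
  by (induction xs) (auto simp: local_rand_true_prob_def algebra_simps add_divide_distrib)

lemma rand_all_mgf_le:
  assumes "0 \<le> lam / real n" "lam / real n \<le> 1" "\<bar>s\<bar> \<le> 1"
  shows "(\<integral>\<^sup>+ys. ennreal (exp (s * (bit_sum ys - rand_all_mean n lam xs)))
            \<partial>rand_all n lam xs)
         \<le> ennreal (exp (real (length xs) * (lam / (2 * real n)) * s\<^sup>2))"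
proof (induction xs)
  case Nil
  then show ?case by (simp add: rand_all_mean_def)
next
  case (Cons x xs)
  define q where "q = lam / (2 * real n)"
  define r where "r = local_rand_true_prob n lam x"
  define A where "A = (\<lambda>y. ennreal (exp (s * (of_bool y - r))))"
  define B where "B = (\<lambda>ys. ennreal (exp (s * (bit_sum ys - rand_all_mean n lam xs))))"
  have r: "0 \<le> r" "r \<le> 1"
    using assms by (auto simp: r_def local_rand_true_prob_def field_simps)
  have "min r (1 - r) = q"
    unfolding r_def q_def by (rule min_local_rand_true_prob[OF assms(1,2)])
  have integrand_eq: "ennreal (exp (s * (bit_sum (y # ys) - rand_all_mean n lam (x # xs)))) = A y * B ys"
    for y ys
    unfolding A_def B_def r_def rand_all_mean_def by (simp add: algebra_simps flip: ennreal_mult exp_add)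
  have "(\<integral>\<^sup>+ys. ennreal (exp (s * (bit_sum ys - rand_all_mean n lam (x # xs))))
           \<partial>rand_all n lam (x # xs))
      = (\<integral>\<^sup>+y. (\<integral>\<^sup>+ys. A y * B ys \<partial>rand_all n lam xs) \<partial>local_rand n lam x)"
    by (simp add: integrand_eq del: bit_sum_Cons)
  also have "\<dots> = (\<integral>\<^sup>+y. A y * (\<integral>\<^sup>+ys. B ys \<partial>rand_all n lam xs) \<partial>bernoulli_pmf r)"
    unfolding r_def local_rand_eq_bernoulli_pmf[OF assms(1,2)] by (simp add: nn_integral_cmult)
  also have "\<dots> \<le> (\<integral>\<^sup>+y. A y * ennreal (exp (real (length xs) * q * s\<^sup>2)) \<partial>bernoulli_pmf r)"
    using Cons.IH unfolding B_def q_def by (intro nn_integral_mono mult_left_mono) auto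
  also have "\<dots> = (\<integral>\<^sup>+y. A y \<partial>bernoulli_pmf r) * ennreal (exp (real (length xs) * q * s\<^sup>2))"
    by (simp add: nn_integral_multc)
  also have "\<dots> \<le> ennreal (exp (q * s\<^sup>2)) * ennreal (exp (real (length xs) * q * s\<^sup>2))"
    using nn_integral_bernoulli_centered_exp_le[OF r assms(3)] \<open>min r (1 - r) = q\<close>
    unfolding A_def by (intro mult_right_mono) auto
  also have "\<dots> = ennreal (exp (real (length (x # xs)) * q * s\<^sup>2))"
    by (simp add: algebra_simps flip: ennreal_mult exp_add)
  finally show ?case unfolding q_def .
qed

lemma rand_all_chernoff:
  assumes "0 \<le> lam / real n" "lam / real n \<le> 1" "\<bar>s\<bar> \<le> 1"
  shows "measure_pmf.prob (rand_all n lam xs)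
           {ys. a \<le> s * (bit_sum ys - rand_all_mean n lam xs)}
         \<le> exp (real (length xs) * (lam / (2 * real n)) * s\<^sup>2 - a)"
proof -
  let ?M = "measure_pmf (rand_all n lam xs)"
  let ?X = "\<lambda>ys. s * (bit_sum ys - rand_all_mean n lam xs)"
  have "emeasure ?M {ys \<in> UNIV. a \<le> ?X ys}
        \<le> ennreal (exp (- 1 * a)) * (\<integral>\<^sup>+ys. ennreal (exp (1 * ?X ys)) * indicator UNIV ys \<partial>?M)"
    by (rule Chernoff_ineq_nn_integral_ge) auto
  also have "(\<integral>\<^sup>+ys. ennreal (exp (1 * ?X ys)) * indicator UNIV ys \<partial>?M)
      = (\<integral>\<^sup>+ys. ennreal (exp (s * (bit_sum ys - rand_all_mean n lam xs))) \<partial>?M)"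
    by simp
  also have "ennreal (exp (- 1 * a)) * \<dots>
      \<le> ennreal (exp (- 1 * a)) * ennreal (exp (real (length xs) * (lam / (2 * real n)) * s\<^sup>2))"
    by (rule mult_left_mono[OF rand_all_mgf_le[OF assms]]) simp
  also have "\<dots> = ennreal (exp (real (length xs) * (lam / (2 * real n)) * s\<^sup>2 - a))"
    by (simp flip: ennreal_mult exp_add)
  finally show ?thesis
    by (simp add: measure_pmf.emeasure_eq_measure)
qed

lemma rand_all_deviation_le:
  assumes "0 \<le> lam / real n" "lam / real n \<le> 1" "0 < s" "s \<le> 1"
  shows "measure_pmf.prob (rand_all n lam xs)
           {ys. t \<le> \<bar>bit_sum ys - rand_all_mean n lam xs\<bar>}
         \<le> 2 * exp (real (length xs) * (lam / (2 * real n)) * s\<^sup>2 - s * t)"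
proof -
  let ?M = "rand_all n lam xs"
  let ?D = "\<lambda>ys. bit_sum ys - rand_all_mean n lam xs"
  let ?b = "exp (real (length xs) * (lam / (2 * real n)) * s\<^sup>2 - s * t)"
  have cover: "{ys. t \<le> \<bar>?D ys\<bar>} \<subseteq> {ys. s * t \<le> s * ?D ys} \<union> {ys. s * t \<le> (- s) * ?D ys}"
  proof
    fix ys
    assume "ys \<in> {ys. t \<le> \<bar>?D ys\<bar>}"
    then have "t \<le> ?D ys \<or> t \<le> - ?D ys" by auto
    then have "s * t \<le> s * ?D ys \<or> s * t \<le> s * (- ?D ys)"
      using assms(3) by (auto intro: mult_left_mono)
    then show "ys \<in> {ys. s * t \<le> s * ?D ys} \<union> {ys. s * t \<le> (- s) * ?D ys}"
      by (auto simp: algebra_simps)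
  qed
  have "measure_pmf.prob ?M {ys. t \<le> \<bar>?D ys\<bar>}
      \<le> measure_pmf.prob ?M ({ys. s * t \<le> s * ?D ys} \<union> {ys. s * t \<le> (- s) * ?D ys})"
    using cover by (rule measure_pmf.finite_measure_mono) simp
  also have "\<dots> \<le> measure_pmf.prob ?M {ys. s * t \<le> s * ?D ys}
                   + measure_pmf.prob ?M {ys. s * t \<le> (- s) * ?D ys}"
    by (rule measure_Un_le) auto
  also have "\<dots> \<le> ?b + ?b"
  proof (rule add_mono)
    show "measure_pmf.prob ?M {ys. s * t \<le> s * ?D ys} \<le> ?b"
      using rand_all_chernoff[of lam n s xs "s * t"] assms by simp
    show "measure_pmf.prob ?M {ys. s * t \<le> (- s) * ?D ys} \<le> ?b"
      using rand_all_chernoff[of lam n "- s" xs "s * t"] assms by simp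
  qed
  finally show ?thesis by simp
qed

lemma analyzer_minus_bit_sum:
  assumes "length xs = n" "lam < real n"
  shows "analyzer n lam ys - bit_sum xs
           = real n / (real n - lam) * (bit_sum ys - rand_all_mean n lam xs)"
proof (cases "n = 0")
  case True
  then show ?thesis using assms(1) by (simp add: analyzer_def)
next
  case False
  then show ?thesis
    using assms by (simp add: analyzer_def rand_all_mean_eq field_simps)
qed

lemma P_protocol_tail_le:
  assumes "length xs = n" "0 \<le> lam" "lam < real n" "0 < s" "s \<le> 1"
  shows "measure_pmf.prob (P_protocol n lam xs)
           {z. \<bar>z - bit_sum xs\<bar> > t * (real n / (real n - lam))}
         \<le> 2 * exp (lam / 2 * s\<^sup>2 - s * t)"
proof -
  let ?D = "\<lambda>ys. bit_sum ys - rand_all_mean n lam xs"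
  define c where "c = real n / (real n - lam)"
  have "0 < c" using assms(2,3) by (simp add: c_def)
  have "analyzer n lam -` {z. \<bar>z - bit_sum xs\<bar> > t * c} \<subseteq> {ys. t \<le> \<bar>?D ys\<bar>}"
  proof
    fix ys
    assume "ys \<in> analyzer n lam -` {z. \<bar>z - bit_sum xs\<bar> > t * c}"
    then have "c * t < c * \<bar>?D ys\<bar>"
      using \<open>0 < c\<close>
      by (simp add: analyzer_minus_bit_sum[OF assms(1,3)] c_def[symmetric] abs_mult mult.commute)
    then show "ys \<in> {ys. t \<le> \<bar>?D ys\<bar>}"
      using \<open>0 < c\<close> by simp
  qed
  then have "measure_pmf.prob (P_protocol n lam xs) {z. \<bar>z - bit_sum xs\<bar> > t * c}
      \<le> measure_pmf.prob (rand_all n lam xs) {ys. t \<le> \<bar>?D ys\<bar>}"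
    unfolding P_protocol_eq_map_rand_all by (simp add: measure_pmf.finite_measure_mono)
  also have "\<dots> \<le> 2 * exp (real n * (lam / (2 * real n)) * s\<^sup>2 - s * t)"
    using rand_all_deviation_le[of lam n s xs t] assms by simp
  also have "real n * (lam / (2 * real n)) = lam / 2"
    using assms(2,3) by simp
  finally show ?thesis unfolding c_def .
qed

lemma chernoff_parameter:
  fixes lam L :: real
  assumes "0 < L" "2 * L \<le> lam"
  defines "s \<equiv> sqrt (2 * lam * L) / lam"
  shows "0 < s" "s \<le> 1" "lam / 2 * s\<^sup>2 - s * sqrt (2 * lam * L) = - L"
proof -
  define t where "t = sqrt (2 * lam * L)"
  have "0 < lam" using assms(1,2) by linarith
  have t2: "t\<^sup>2 = 2 * lam * L" and "0 < t"
    using \<open>0 < lam\<close> assms(1) by (simp_all add: t_def)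
  then have "t\<^sup>2 \<le> lam\<^sup>2"
    using assms(2) \<open>0 < lam\<close> by (simp add: power2_eq_square)
  then have "t \<le> lam"
    using \<open>0 < t\<close> \<open>0 < lam\<close> by (simp add: power2_le_iff_abs_le)
  then show "0 < s" "s \<le> 1"
    using \<open>0 < t\<close> \<open>0 < lam\<close> by (simp_all add: s_def t_def[symmetric])
  show "lam / 2 * s\<^sup>2 - s * sqrt (2 * lam * L) = - L"
    using t2 \<open>0 < lam\<close> assms(1)
    by (simp add: s_def t_def[symmetric] power_divide field_simps power2_eq_square)
qed

theorem theorem4p11:
  fixes n :: nat and \<beta> lam :: real and xs :: "bool list"
  assumes "\<beta> > 0"
    and "real n > lam"
    and "lam \<ge> 2 * ln (2 / \<beta>)"
    and "length xs = n"
  shows "measure_pmf.prob (P_protocol n lam xs)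
           {z. \<bar>z - bit_sum xs\<bar> > sqrt (2 * lam * ln (2 / \<beta>)) * (real n / (real n - lam))}
         \<le> \<beta>"
proof (cases "\<beta> < 1")
  case False
  then show ?thesis
    using measure_pmf.prob_le_1 order_trans not_less by blast
next
  case True
  define L where "L = ln (2 / \<beta>)"
  define s where "s = sqrt (2 * lam * L) / lam"
  have "0 < L"
    using True assms(1) by (simp add: L_def)
  then have s: "0 < s" "s \<le> 1" "lam / 2 * s\<^sup>2 - s * sqrt (2 * lam * L) = - L"
    using chernoff_parameter[of L lam] assms(3) by (simp_all add: s_def L_def)
  have "measure_pmf.prob (P_protocol n lam xs)
          {z. \<bar>z - bit_sum xs\<bar> > sqrt (2 * lam * L) * (real n / (real n - lam))}
        \<le> 2 * exp (lam / 2 * s\<^sup>2 - s * sqrt (2 * lam * L))"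
    using P_protocol_tail_le[of xs n lam s] assms(2,3,4) s(1,2) \<open>0 < L\<close> by (simp add: L_def)
  also have "\<dots> = \<beta>"
    unfolding s(3) using assms(1) by (simp add: L_def exp_minus)
  finally show ?thesis
    unfolding L_def .
qed

end
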